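(* Let $N \ge 1$ and $M \ge 1$ be integers, and let $\mathcal{N}_0 > 0$, $\xi \ge 1$ and $P_{const} > 0$ be real constants. For a transmit power $P \ge 0$ define \[ \eta_{MRT}^\circ(P) = \frac{N \log\left(1 + \dfrac{M P}{(N-1)P + N\mathcal{N}_0}\right)}{\xi P + P_{const}} \quad\text{and}\quad \eta_{LB}(P) = \frac{N M P}{(\xi P + P_{const})\{(N + M -1) P + N\mathcal{N}_0\}}. \] Then $\eta_{LB}(P) \le \eta_{MRT}^\circ(P)$ for all $P \ge 0$, i.e. $\eta_{LB}$ is a lower bound of $\eta_{MRT}^\circ$. Moreover, the saturation power $P_{LB}$ corresponding to $\eta_{LB}$, i.e. the power $P > 0$ at which $\eta_{LB}(P)$ is maximized, is \[ P_{LB} = \sqrt{\frac{N \mathcal{N}_0 P_{const}}{\xi(N + M -1)}}. \]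
   Context: Here $\log$ denotes the natural logarithm. In the paper's model, $\eta_{MRT}^\circ$ is the large-system (deterministic) energy efficiency of maximal ratio transmission beamforming with equal power allocation in a multi-user MISO downlink with $M$ base-station antennas and $N$ single-antenna users: $P$ is the total transmit power, $\mathcal{N}_0$ the normalized noise power, $\xi$ the power amplifier inefficiency and $P_{const}$ the constant (circuit plus static) power consumption. *)

theory Defs
  imports Complex_Main
begin

definition eta_MRT :: "nat \<Rightarrow> nat \<Rightarrow> real \<Rightarrow> real \<Rightarrow> real \<Rightarrow> real \<Rightarrow> real" where
  "eta_MRT N M N0 xi Pc P =
     real N * ln (1 + real M * P / ((real N - 1) * P + real N * N0)) / (xi * P + Pc)"

definition eta_LB :: "nat \<Rightarrow> nat \<Rightarrow> real \<Rightarrow> real \<Rightarrow> real \<Rightarrow> real \<Rightarrow> real" where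
  "eta_LB N M N0 xi Pc P =
     real N * real M * P / ((xi * P + Pc) * ((real N + real M - 1) * P + real N * N0))"

definition P_LB :: "nat \<Rightarrow> nat \<Rightarrow> real \<Rightarrow> real \<Rightarrow> real \<Rightarrow> real" where
  "P_LB N M N0 xi Pc = sqrt (real N * N0 * Pc / (xi * (real N + real M - 1)))"

end

theory Submission
  imports Defs
begin

text \<open>The bound \<open>\<eta>\<^sub>L\<^sub>B \<le> \<eta>\<^sub>M\<^sub>R\<^sub>T\<close> is the elementary inequality \<open>x/(1+x) \<le> ln (1+x)\<close> applied to the
  SINR \<open>x = MP/((N-1)P + N\<N>\<^sub>0)\<close>. The function \<open>\<eta>\<^sub>L\<^sub>B\<close> has the shape \<open>kP/((cP+d)(aP+b))\<close>;
  clearing denominators, its value at \<open>s\<close> minus its value at \<open>P\<close> has the sign of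
  \<open>(P - s)(acsP - bd)\<close>, which becomes the perfect square \<open>acs(P - s)\<^sup>2\<close> exactly when
  \<open>s\<^sup>2 = bd/(ac)\<close>.\<close>

lemma ratio_le_ln_one_plus_ratio:
  fixes u d :: real
  assumes "u \<ge> 0" and "d > 0"
  shows "u / (d + u) \<le> ln (1 + u / d)"
proof -
  have "u / (d + u) = (u / d) / (1 + u / d)"
    using assms by (simp add: field_simps)
  also have "\<dots> \<le> ln (u / d + 1)"
    using assms by (intro ln_add1_ge) simp
  finally show ?thesis by (simp add: add.commute)
qed

lemma eta_LB_le_eta_MRT:
  fixes N M :: nat and N0 xi Pc P :: real
  assumes "N \<ge> 1" and "N0 > 0" and "xi \<ge> 0" and "Pc > 0" and "P \<ge> 0"
  shows "eta_LB N M N0 xi Pc P \<le> eta_MRT N M N0 xi Pc P"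
proof -
  define d where "d = (real N - 1) * P + real N * N0"
  have "d > 0"
    unfolding d_def using assms by (simp add: add_nonneg_pos)
  have "xi * P + Pc > 0"
    using assms by (simp add: add_nonneg_pos)
  have sinr: "real M * P / ((real N + real M - 1) * P + real N * N0)
      \<le> ln (1 + real M * P / d)"
    using ratio_le_ln_one_plus_ratio[of "real M * P" d] \<open>d > 0\<close> assms
    by (simp add: d_def algebra_simps)
  have "eta_LB N M N0 xi Pc P
      = real N * (real M * P / ((real N + real M - 1) * P + real N * N0)) / (xi * P + Pc)"
    unfolding eta_LB_def by (simp add: ac_simps)
  also have "\<dots> \<le> real N * ln (1 + real M * P / d) / (xi * P + Pc)"
    using sinr \<open>xi * P + Pc > 0\<close> by (intro divide_right_mono mult_left_mono) auto
  also have "\<dots> = eta_MRT N M N0 xi Pc P"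
    unfolding eta_MRT_def d_def ..
  finally show ?thesis .
qed

lemma peak_cross_difference:
  fixes a b c d s P :: real
  assumes "b * d = c * a * s\<^sup>2"
  shows "s * ((c * P + d) * (a * P + b)) - P * ((c * s + d) * (a * s + b))
       = c * a * s * (P - s)\<^sup>2"
proof -
  have "s * ((c * P + d) * (a * P + b)) - P * ((c * s + d) * (a * s + b))
      = (P - s) * (c * a * s * P - b * d)"
    by (simp add: algebra_simps power2_eq_square)
  also have "\<dots> = c * a * s * (P - s)\<^sup>2"
    using assms by (simp add: algebra_simps power2_eq_square)
  finally show ?thesis .
qed

lemma rational_peak:
  fixes f :: "real \<Rightarrow> real" and k a b c d s P :: real
  assumes f_def: "f = (\<lambda>x. k * x / ((c * x + d) * (a * x + b)))"
    and s_def: "s = sqrt (b * d / (c * a))"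
    and "k > 0" "a > 0" "b > 0" "c > 0" "d > 0" and "P > 0"
  shows "f P \<le> f s" and "f P = f s \<Longrightarrow> P = s"
proof -
  have "s > 0"
    unfolding s_def using assms by simp
  have "b * d = c * a * s\<^sup>2"
    unfolding s_def using assms by simp
  then have cross: "s * ((c * P + d) * (a * P + b)) - P * ((c * s + d) * (a * s + b))
      = c * a * s * (P - s)\<^sup>2"
    by (rule peak_cross_difference)
  define DP DS where "DP = (c * P + d) * (a * P + b)" and "DS = (c * s + d) * (a * s + b)"
  have "DP > 0" "DS > 0"
    unfolding DP_def DS_def using assms \<open>s > 0\<close> by (simp_all add: add_pos_pos)
  have f_le_iff: "f P \<le> f s \<longleftrightarrow> P * DS \<le> s * DP"
  proof -
    have "f P \<le> f s \<longleftrightarrow> k * (P * DS) \<le> k * (s * DP)"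
      unfolding f_def DP_def [symmetric] DS_def [symmetric]
      using \<open>DP > 0\<close> \<open>DS > 0\<close> by (simp add: divide_le_eq le_divide_eq ac_simps)
    then show ?thesis using \<open>k > 0\<close> by simp
  qed
  have f_eq_iff: "f P = f s \<longleftrightarrow> P * DS = s * DP"
  proof -
    have "f P = f s \<longleftrightarrow> k * (P * DS) = k * (s * DP)"
      unfolding f_def DP_def [symmetric] DS_def [symmetric]
      using \<open>DP > 0\<close> \<open>DS > 0\<close> by (simp add: divide_eq_eq eq_divide_eq ac_simps)
    then show ?thesis using \<open>k > 0\<close> by simp
  qed
  have "c * a * s * (P - s)\<^sup>2 \<ge> 0"
    using assms \<open>s > 0\<close> by simp
  then show "f P \<le> f s"
    using f_le_iff cross unfolding DP_def DS_def by linarith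
  assume "f P = f s"
  then have "c * a * s * (P - s)\<^sup>2 = 0"
    using f_eq_iff cross unfolding DP_def DS_def by linarith
  then show "P = s"
    using assms \<open>s > 0\<close> by simp
qed

theorem theorem1:
  fixes N M :: nat and N0 xi Pc :: real
  assumes "N \<ge> 1" and "M \<ge> 1" and "N0 > 0" and "xi \<ge> 1" and "Pc > 0"
  shows "(\<forall>P::real. P \<ge> 0 \<longrightarrow> eta_LB N M N0 xi Pc P \<le> eta_MRT N M N0 xi Pc P)
       \<and> P_LB N M N0 xi Pc > 0
       \<and> (\<forall>P::real. P > 0 \<longrightarrow> eta_LB N M N0 xi Pc P \<le> eta_LB N M N0 xi Pc (P_LB N M N0 xi Pc))
       \<and> (\<forall>P::real. P > 0 \<and> eta_LB N M N0 xi Pc P = eta_LB N M N0 xi Pc (P_LB N M N0 xi Pc)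
             \<longrightarrow> P = P_LB N M N0 xi Pc)"
proof -
  have pos: "real N * real M > 0" "real N + real M - 1 > 0" "real N * N0 > 0" "xi > 0"
    using assms by auto
  have eta_LB_eq: "eta_LB N M N0 xi Pc = (\<lambda>P. real N * real M * P
      / ((xi * P + Pc) * ((real N + real M - 1) * P + real N * N0)))"
    unfolding eta_LB_def ..
  have P_LB_eq: "P_LB N M N0 xi Pc
      = sqrt (real N * N0 * Pc / (xi * (real N + real M - 1)))"
    unfolding P_LB_def ..
  have "P_LB N M N0 xi Pc > 0"
    unfolding P_LB_eq using pos assms by simp
  moreover note rational_peak[OF eta_LB_eq P_LB_eq pos(1,2,3,4) \<open>Pc > 0\<close>]
  moreover have "xi \<ge> 0"
    using assms by simp
  ultimately show ?thesis
    using eta_LB_le_eta_MRT[of N N0 xi Pc] assms(1,3,5) by blast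
qed

end
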